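(* Let $\mu$ be a probability measure on $\mathcal{X}$, $0\le c_1<1<c_2$ with $\frac{c_2-c_1}{1-c_1}\in\mathbb{N}$, $\tilde{\mathcal{P}}=\tilde{\mathcal{P}}_{c_1,c_2,\mu}$, $\varepsilon\ge0$ and $\delta\in[0,1]$ with $\delta\le\frac{(c_2-c_1e^\varepsilon)(1-c_1)}{c_2-c_1}$. Suppose $\mu$ is $(\alpha,\frac1\alpha,1)$-decomposable with $\alpha=\frac{1-c_1}{c_2-c_1}$. Let \[ r_1=\frac{c_1}{c_2-c_1}\cdot\frac{(1-c_1)e^\varepsilon+c_2-1}{1-\delta},\qquad r_2=\frac{c_2}{c_2-c_1}\cdot\frac{(1-c_1)e^\varepsilon+c_2-1}{e^\varepsilon+\frac{c_2-1}{1-c_1}\delta}. \] Then for every $f$-divergence, \[ \mathcal{R}(\mathcal{Q}_{\mathcal{X},\tilde{\mathcal{P}},\varepsilon,\delta},\tilde{\mathcal{P}},f)=\frac{1-r_1}{r_2-r_1}f(r_2)+\frac{r_2-1}{r_2-r_1}f(r_1). \] Moreover, with $\lambda^\star_{\varepsilon,\delta}=\frac{e^\varepsilon+\frac{c_2-c_1}{1-c_1}\delta-1}{(1-c_1)e^\varepsilon+c_2-1}$, the sampler $\mathbf{Q}^\star_{\varepsilon,\delta}(P)=\lambda^\star_{\varepsilon,\delta}P+(1-\lambda^\star_{\varepsilon,\delta})\mu$ belongs to $\mathcal{Q}_{\mathcal{X},\tilde{\mathcal{P}},\varepsilon,\delta}$ and satisfies $\sup_{P\in\tilde{\mathcal{P}}}D_f(P\|\mathbf{Q}^\star_{\varepsilon,\delta}(P))=\mathcal{R}(\mathcal{Q}_{\mathcal{X},\tilde{\mathcal{P}},\varepsilon,\delta},\tilde{\mathcal{P}},f)$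 for every $f$-divergence.
   Context: $\tilde{\mathcal{P}}_{c_1,c_2,\mu}=\{P\in\mathcal{P}(\mathcal{X}):P\ll\mu,\ c_1\le\frac{dP}{d\mu}\le c_2\ \mu\text{-a.e.}\}$. $\mu$ is $(\alpha,t,u)$-decomposable if there are measurable $A_1,\dots,A_t$ with $\mu(A_i)=\alpha$ and each point in at most $u$ of them. A sampler $\mathbf{Q}:\tilde{\mathcal{P}}\to\mathcal{P}(\mathcal{X})$ is $(\varepsilon,\delta)$-LDP if $\mathbf{Q}(A\mid P)\le e^\varepsilon\mathbf{Q}(A\mid P')+\delta$ for all $P,P'\in\tilde{\mathcal{P}}$ and measurable $A$; $\mathcal{Q}_{\mathcal{X},\tilde{\mathcal{P}},\varepsilon,\delta}$ is the set of such samplers. $D_f(P\|Q)=\int qf(p/q)\,d\nu$ for convex $f:(0,\infty)\to\mathbb{R}$, $f(1)=0$ (conventions $f(0)=\lim_{t\to0^+}f(t)$, $0f(0/0)=0$, $0f(a/0)=a\lim_{u\to\infty}f(u)/u$). $\mathcal{R}(\mathcal{Q}_{\mathcal{X},\tilde{\mathcal{P}},\varepsilon,\delta},\tilde{\mathcal{P}},f)=\inf_{\mathbf{Q}\in\mathcal{Q}_{\mathcal{X},\tilde{\mathcal{P}},\varepsilon,\delta}}\sup_{P\in\tilde{\mathcal{P}}}D_f(P\|\mathbf{Q}(P))$. *)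

theory Defs
  imports "HOL-Probability.Probability"
begin

definition Ptilde :: "real \<Rightarrow> real \<Rightarrow> 'a measure \<Rightarrow> 'a measure set" where
  "Ptilde c1 c2 \<mu> = {P. prob_space P \<and> sets P = sets \<mu> \<and> absolutely_continuous \<mu> P \<and>
      (AE x in \<mu>. ennreal c1 \<le> RN_deriv \<mu> P x \<and> RN_deriv \<mu> P x \<le> ennreal c2)}"

definition decomposable :: "'a measure \<Rightarrow> real \<Rightarrow> nat \<Rightarrow> nat \<Rightarrow> bool" where
  "decomposable \<mu> \<alpha> t u \<longleftrightarrow>
     (\<exists>A :: nat \<Rightarrow> 'a set. (\<forall>i\<in>{1..t}. A i \<in> sets \<mu> \<and> measure \<mu> (A i) = \<alpha>) \<and>
        (\<forall>x\<in>space \<mu>. card {i\<in>{1..t}. x \<in> A i} \<le> u))"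

definition samplers :: "'a measure \<Rightarrow> 'a measure set \<Rightarrow> real \<Rightarrow> real \<Rightarrow> ('a measure \<Rightarrow> 'a measure) set" where
  "samplers X PP \<epsilon> \<delta> = {Q.
      (\<forall>P\<in>PP. prob_space (Q P) \<and> sets (Q P) = sets X) \<and>
      (\<forall>P\<in>PP. \<forall>P'\<in>PP. \<forall>A\<in>sets X. measure (Q P) A \<le> exp \<epsilon> * measure (Q P') A + \<delta>)}"

text \<open>Conventions: f(0) = lim_{t->0+} f t, and f'(infinity) = lim_{u->infinity} f u / u (extended reals).\<close>
definition f_at0 :: "(real \<Rightarrow> real) \<Rightarrow> ereal" where
  "f_at0 f = Lim (at_right 0) (\<lambda>t. ereal (f t))"

definition f_slope :: "(real \<Rightarrow> real) \<Rightarrow> ereal" where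
  "f_slope f = Lim at_top (\<lambda>u. ereal (f u / u))"

definition f_ext :: "(real \<Rightarrow> real) \<Rightarrow> real \<Rightarrow> ereal" where
  "f_ext f t = (if t = 0 then f_at0 f else ereal (f t))"

definition fdiv_pt :: "(real \<Rightarrow> real) \<Rightarrow> real \<Rightarrow> real \<Rightarrow> ereal" where
  "fdiv_pt f a b =
     (if b > 0 then (if a > 0 then ereal (b * f (a / b)) else ereal b * f_at0 f)
      else (if a > 0 then ereal a * f_slope f else 0))"

definition fdiv :: "(real \<Rightarrow> real) \<Rightarrow> 'a measure \<Rightarrow> 'a measure \<Rightarrow> ereal" where
  "fdiv f P Q =
    (let \<nu> = measure_of (space P) (sets P) (\<lambda>A. emeasure P A + emeasure Q A);
         p = (\<lambda>x. enn2real (RN_deriv \<nu> P x));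
         q = (\<lambda>x. enn2real (RN_deriv \<nu> Q x));
         g = (\<lambda>x. fdiv_pt f (p x) (q x))
     in enn2ereal (\<integral>\<^sup>+ x. e2ennreal (max 0 (g x)) \<partial>\<nu>)
        - enn2ereal (\<integral>\<^sup>+ x. e2ennreal (max 0 (- g x)) \<partial>\<nu>))"

definition minimax_risk :: "'a measure \<Rightarrow> 'a measure set \<Rightarrow> real \<Rightarrow> real \<Rightarrow> (real \<Rightarrow> real) \<Rightarrow> ereal" where
  "minimax_risk X PP \<epsilon> \<delta> f = (INF Q\<in>samplers X PP \<epsilon> \<delta>. SUP P\<in>PP. fdiv f P (Q P))"

definition mixture :: "real \<Rightarrow> 'a measure \<Rightarrow> 'a measure \<Rightarrow> 'a measure" where
  "mixture l P \<mu> = measure_of (space \<mu>) (sets \<mu>)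
      (\<lambda>A. ennreal l * emeasure P A + ennreal (1 - l) * emeasure \<mu> A)"

end

theory Submission
  imports Defs
begin

text \<open>
  For \<open>P\<close> in the class, the density \<open>g = dP/d\<mu>\<close> takes values in \<open>[c1, c2]\<close>, so the density
  ratio \<open>dP/dQ\<^sup>\<star>(P) = g / (\<lambda> g + 1 - \<lambda>)\<close> takes values in \<open>[r1, r2]\<close>. By convexity, \<open>f\<close> lies
  below its chord between \<open>r1\<close> and \<open>r2\<close> there, and integrating the chord against \<open>Q\<^sup>\<star>(P)\<close> gives
  its value at \<open>1\<close>, the claimed risk. The weight \<open>\<lambda>\<close> is the largest one for which the mixture
  sampler is \<open>(\<epsilon>, \<delta>)\<close>-LDP.

  For the lower bound, split the space into \<open>k\<close> disjoint sets \<open>A\<^sub>i\<close> of mass \<open>\<alpha> = 1/k\<close> and let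
  \<open>P\<^sub>i\<close> have density \<open>c2\<close> on \<open>A\<^sub>i\<close> and \<open>c1\<close> elsewhere. Summing the privacy constraints
  \<open>Q(P\<^sub>i)(A\<^sub>i) \<le> e\<^sup>\<epsilon> Q(P\<^sub>j)(A\<^sub>i) + \<delta>\<close> over all \<open>j \<noteq> i\<close> and then over \<open>i\<close> shows that
  some \<open>i\<close> has \<open>Q(P\<^sub>i)(A\<^sub>i) \<le> \<theta> = (e\<^sup>\<epsilon> + (k - 1)\<delta>) / (e\<^sup>\<epsilon> + k - 1)\<close>, while
  \<open>P\<^sub>i(A\<^sub>i) = \<theta> r2\<close>. Integrating the tangent line of \<open>f\<close> at \<open>r2\<close> over \<open>A\<^sub>i\<close> and the tangent
  line at \<open>r1\<close> over its complement bounds \<open>D\<^sub>f(P\<^sub>i \<parallel> Q(P\<^sub>i))\<close> from below by the same chord value.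
\<close>

section \<open>Convex functions on the positive reals\<close>

lemma convex_on_slope_mono:
  fixes g :: "real \<Rightarrow> real"
  assumes g: "convex_on {0<..} g" and "0 < u" "u < v" "u \<le> x" "x < y" "v \<le> y"
  shows "(g v - g u) / (v - u) \<le> (g y - g x) / (y - x)"
proof -
  have "(g v - g u) / (v - u) \<le> (g y - g u) / (y - u)"
  proof (cases "v = y")
    case False
    then have "(g u - g v) / (u - v) \<le> (g u - g y) / (u - y)"
      using convex_on_slope_le(1)[OF g, of u y v] assms by auto
    then show ?thesis by (smt (verit) minus_divide_divide)
  qed simp
  also have "\<dots> \<le> (g y - g x) / (y - x)"
  proof (cases "u = x")
    case False
    then have "(g u - g y) / (u - y) \<le> (g x - g y) / (x - y)"
      using convex_on_slope_le(2)[OF g, of u y x] assms by auto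
    then show ?thesis by (smt (verit) minus_divide_divide)
  qed simp
  finally show ?thesis .
qed

lemma tendsto_at_right_SUP_antimono:
  fixes h :: "real \<Rightarrow> 'b::{complete_linorder,linorder_topology}"
  assumes "a < b" and anti: "\<And>s t. a < s \<Longrightarrow> s \<le> t \<Longrightarrow> t < b \<Longrightarrow> h t \<le> h s"
  shows "(h \<longlongrightarrow> (SUP t\<in>{a<..<b}. h t)) (at_right a)"
proof (rule order_tendstoI)
  fix y assume "(SUP t\<in>{a<..<b}. h t) < y"
  then have "\<forall>t\<in>{a<..<b}. h t < y"
    by (metis SUP_upper order_le_less_trans)
  then show "\<forall>\<^sub>F t in at_right a. h t < y"
    using eventually_at_right_real[OF \<open>a < b\<close>] by (auto elim: eventually_mono)
next
  fix y assume "y < (SUP t\<in>{a<..<b}. h t)"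
  then obtain t0 where t0: "t0 \<in> {a<..<b}" "y < h t0"
    by (auto simp: less_SUP_iff)
  have "\<forall>\<^sub>F t in at_right a. t \<in> {a<..<t0}"
    using t0 by (intro eventually_at_right_real) auto
  then show "\<forall>\<^sub>F t in at_right a. y < h t"
    by (rule eventually_mono) (use t0 anti in \<open>fastforce intro: order_less_le_trans\<close>)
qed

lemma convex_on_tendsto_at_right_0:
  fixes g :: "real \<Rightarrow> real"
  assumes g: "convex_on {0<..} g"
  shows "\<exists>l. ((\<lambda>t. ereal (g t)) \<longlongrightarrow> l) (at_right 0)"
proof -
  \<comment> \<open>Subtracting the slope \<open>m\<close> of a chord to the right makes \<open>g\<close> antitone near \<open>0\<close>.\<close>
  define m where "m = (g 1 - g (1/2)) / (1 - 1/2)"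
  have "g t - m * t \<le> g s - m * s" if "0 < s" "s \<le> t" "t < 1/2" for s t
  proof (cases "s = t")
    case False
    then have "(g t - g s) / (t - s) \<le> m"
      unfolding m_def using that by (intro convex_on_slope_mono[OF g]) auto
    then show ?thesis using that False by (simp add: divide_le_eq algebra_simps)
  qed simp
  then have "((\<lambda>t. ereal (g t - m * t)) \<longlongrightarrow> (SUP t\<in>{0<..<1/2}. ereal (g t - m * t))) (at_right 0)"
    by (intro tendsto_at_right_SUP_antimono) auto
  moreover have "((\<lambda>t. ereal (m * t)) \<longlongrightarrow> ereal (m * 0)) (at_right 0)"
    unfolding lim_ereal by (intro tendsto_intros)
  ultimately have "((\<lambda>t. ereal (g t - m * t) + ereal (m * t)) \<longlongrightarrow> (SUP t\<in>{0<..<1/2}. ereal (g t - m * t)) + ereal (m * 0)) (at_right 0)"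
    by (intro tendsto_add_ereal_general1) auto
  then show ?thesis by auto
qed

lemma convex_on_perspective:
  fixes f :: "real \<Rightarrow> real"
  assumes f: "convex_on {0<..} f"
  shows "convex_on {0<..} (\<lambda>t. t * f (1 / t))"
proof (rule convex_onI)
  fix a b th :: real
  assume a: "a \<in> {0<..}" and b: "b \<in> {0<..}" and th: "0 < th" "th < 1"
  define t where "t = (1 - th) * a + th * b"
  define w where "w = (1 - th) * a / t"
  have t: "0 < t" using a b th unfolding t_def by (auto intro: add_pos_pos)
  have tw: "t * w = (1 - th) * a" "t * (1 - w) = th * b"
    using t unfolding w_def t_def by (auto simp: field_simps)
  have w: "0 \<le> w" "w \<le> 1"
    using t a b th unfolding w_def t_def by (auto simp: field_simps)
  have "w * (1 / a) + (1 - w) * (1 / b) = (t * w) / (t * a) + (t * (1 - w)) / (t * b)"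
    using t a b by simp
  also have "\<dots> = 1 / t"
    unfolding tw using a b t th by (simp add: add_divide_distrib[symmetric] t_def)
  finally have "f (1 / t) \<le> w * f (1 / a) + (1 - w) * f (1 / b)"
    using convex_onD[OF f, of "1 - w" "1/a" "1/b"] a b w by auto
  then have "t * f (1 / t) \<le> t * (w * f (1 / a) + (1 - w) * f (1 / b))"
    using t by (intro mult_left_mono) auto
  also have "\<dots> = (t * w) * f (1 / a) + (t * (1 - w)) * f (1 / b)"
    by (simp add: algebra_simps)
  finally show "((1 - th) *\<^sub>R a + th *\<^sub>R b) * f (1 / ((1 - th) *\<^sub>R a + th *\<^sub>R b))
      \<le> (1 - th) * (a * f (1 / a)) + th * (b * f (1 / b))"
    unfolding tw by (simp add: t_def)
qed simp

lemma tendsto_f_at0: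
  assumes f: "convex_on {0<..} f"
  shows "((\<lambda>t. ereal (f t)) \<longlongrightarrow> f_at0 f) (at_right 0)"
  using convex_on_tendsto_at_right_0[OF f] unfolding f_at0_def
  by (metis tendsto_Lim trivial_limit_at_right_real)

lemma tendsto_f_slope:
  assumes f: "convex_on {0<..} f"
  shows "((\<lambda>u. ereal (f u / u)) \<longlongrightarrow> f_slope f) at_top"
proof -
  obtain l where l: "((\<lambda>t. ereal (t * f (1 / t))) \<longlongrightarrow> l) (at_right 0)"
    using convex_on_tendsto_at_right_0[OF convex_on_perspective[OF f]] by blast
  have "filterlim (\<lambda>u::real. 1 / u) (at_right 0) at_top"
    using filterlim_inverse_at_right_top by (simp add: inverse_eq_divide)
  from filterlim_compose[OF l this]
  have "((\<lambda>u. ereal (f u / u)) \<longlongrightarrow> l) at_top"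
    by (rule Lim_transform_eventually)
      (use eventually_gt_at_top[of 0] in \<open>auto elim: eventually_mono\<close>)
  then show ?thesis
    unfolding f_slope_def by (metis tendsto_Lim trivial_limit_at_top_linorder)
qed

lemma f_at0_ge_line:
  assumes f: "convex_on {0<..} f" and line: "\<And>t. 0 < t \<Longrightarrow> s * t + b \<le> f t"
  shows "ereal b \<le> f_at0 f"
proof (rule tendsto_le[OF _ tendsto_f_at0[OF f]])
  have "((\<lambda>t. s * t + b) \<longlongrightarrow> s * 0 + b) (at_right 0)"
    by (intro tendsto_intros)
  then show "((\<lambda>t. ereal (s * t + b)) \<longlongrightarrow> ereal b) (at_right 0)"
    by (simp add: lim_ereal)
  show "\<forall>\<^sub>F t in at_right 0. ereal (s * t + b) \<le> ereal (f t)"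
    using eventually_at_right_real[of 0 1] line by (auto elim: eventually_mono)
qed simp

lemma f_slope_ge_line:
  assumes f: "convex_on {0<..} f" and line: "\<And>t. 0 < t \<Longrightarrow> s * t + b \<le> f t"
  shows "ereal s \<le> f_slope f"
proof (rule tendsto_le[OF _ tendsto_f_slope[OF f]])
  have "((\<lambda>t. s + b / t) \<longlongrightarrow> s + 0) at_top"
    by (intro tendsto_intros tendsto_divide_0[OF tendsto_const]
        filterlim_at_top_imp_at_infinity[OF filterlim_ident])
  then show "((\<lambda>t. ereal (s + b / t)) \<longlongrightarrow> ereal s) at_top"
    by (simp add: lim_ereal)
  show "\<forall>\<^sub>F t in at_top. ereal (s + b / t) \<le> ereal (f t / t)"
    using eventually_gt_at_top[of 0]
  proof (rule eventually_mono)
    fix t :: real assume "0 < t"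
    then have "t * (s * t + b) \<le> t * f t" using line[of t] by (intro mult_left_mono) auto
    then show "ereal (s + b / t) \<le> ereal (f t / t)" using \<open>0 < t\<close> by (simp add: field_simps)
  qed
qed simp

lemma convex_on_supporting_line:
  fixes f :: "real \<Rightarrow> real"
  assumes f: "convex_on {0<..} f" and x: "0 < x"
  obtains s where "\<And>y. 0 < y \<Longrightarrow> f x + s * (y - x) \<le> f y"
    and "\<And>t. 0 < t \<Longrightarrow> t < x \<Longrightarrow> (f x - f t) / (x - t) \<le> s"
    and "\<And>u. x < u \<Longrightarrow> s \<le> (f u - f x) / (u - x)"
proof
  define R where "R = (\<lambda>u. (f x - f u) / (x - u)) ` {x<..}"
  have R_eq: "(f x - f u) / (x - u) = (f u - f x) / (u - x)" for u
    by (metis minus_diff_eq minus_divide_divide)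
  have left_le_R: "(f x - f t) / (x - t) \<le> r" if "0 < t" "t < x" "r \<in> R" for t r
  proof -
    obtain u where "x < u" "r = (f u - f x) / (u - x)"
      using \<open>r \<in> R\<close> unfolding R_def R_eq by auto
    then show ?thesis
      using convex_on_slope_mono[OF f, of t x x u] that by simp
  qed
  have R: "R \<noteq> {}" "bdd_below R"
    using left_le_R[of "x / 2"] x unfolding R_def bdd_below_def by auto
  have "{x<..} \<inter> {0<..} = {x<..}" using x by auto
  then show "f x + Inf R * (y - x) \<le> f y" if "0 < y" for y
    using convex_le_Inf_differential[OF f, of x y] x that unfolding R_def by (simp add: interior_open)
  show "(f x - f t) / (x - t) \<le> Inf R" if "0 < t" "t < x" for t
    using left_le_R[OF that] R by (intro cInf_greatest) auto
  show "Inf R \<le> (f u - f x) / (u - x)" if "x < u" for u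
    using cInf_lower[OF _ R(2), of "(f x - f u) / (x - u)"] that unfolding R_def R_eq by auto
qed

lemma convex_on_le_chord_f_ext:
  fixes f :: "real \<Rightarrow> real"
  assumes f: "convex_on {0<..} f" and fa: "f_ext f a = ereal fa"
    and "0 \<le> a" "a \<le> t" "t \<le> b" "0 < t" "a < b"
  shows "f t \<le> fa + (f b - fa) / (b - a) * (t - a)"
proof -
  have chord: "f t \<le> f e + (f b - f e) / (b - e) * (t - e)" if "0 < e" "e \<le> t" "e < b" for e
  proof -
    have "convex_on {e..b} f" using that by (intro convex_on_subset[OF f]) auto
    from convex_onD_Icc'[OF this, of t] that assms show ?thesis by simp
  qed
  show ?thesis
  proof (cases "a = 0")
    case True
    have "(f \<longlongrightarrow> fa) (at_right 0)"
      using tendsto_f_at0[OF f] fa True by (simp add: f_ext_def lim_ereal)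
    then have "((\<lambda>e. f e + (f b - f e) / (b - e) * (t - e)) \<longlongrightarrow> fa + (f b - fa) / (b - 0) * (t - 0)) (at_right 0)"
      using assms True by (intro tendsto_intros) auto
    moreover have "\<forall>\<^sub>F e in at_right 0. f t \<le> f e + (f b - f e) / (b - e) * (t - e)"
      using eventually_at_right_real[OF \<open>0 < t\<close>] by (rule eventually_mono) (use chord assms in auto)
    ultimately show ?thesis
      using True by (intro tendsto_le[OF _ _ tendsto_const]) auto
  next
    case False
    then show ?thesis using chord[of a] fa assms by (simp add: f_ext_def)
  qed
qed

definition chord_value :: "(real \<Rightarrow> real) \<Rightarrow> real \<Rightarrow> real \<Rightarrow> ereal" where
  "chord_value f r1 r2 =
     ereal ((1 - r1) / (r2 - r1)) * f_ext f r2 + ereal ((r2 - 1) / (r2 - r1)) * f_ext f r1"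

lemma f_ext_neq_MInf:
  assumes f: "convex_on {0<..} f" and "0 \<le> t"
  shows "f_ext f t \<noteq> -\<infinity>"
proof -
  obtain s where "\<And>y. 0 < y \<Longrightarrow> f 1 + s * (y - 1) \<le> f y"
    using convex_on_supporting_line[OF f zero_less_one] by metis
  then have "ereal (f 1 - s) \<le> f_at0 f"
    by (intro f_at0_ge_line[OF f, of s]) (auto simp: algebra_simps)
  then show ?thesis by (auto simp: f_ext_def)
qed

lemma chord_value_eq:
  assumes "r1 < 1" "1 < r2" "f_ext f r1 = ereal F1"
  shows "chord_value f r1 r2 = ereal ((1 - r1) / (r2 - r1) * f r2 + (1 - (1 - r1) / (r2 - r1)) * F1)"
proof -
  have "(r2 - 1) / (r2 - r1) = 1 - (1 - r1) / (r2 - r1)" using assms by (simp add: field_simps)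
  then show ?thesis using assms by (simp add: chord_value_def f_ext_def)
qed

text \<open>For \<open>r1 = 1\<close> both weights are \<open>0 / 0 = 0\<close>, and \<open>ereal 0 * \<infinity> = 0\<close> covers \<open>f_ext f r1 = \<infinity>\<close>.\<close>

lemma chord_value_at_1:
  assumes "f 1 = 0"
  shows "chord_value f r1 1 = 0"
  using assms by (simp add: chord_value_def f_ext_def)

section \<open>The integrand of an f-divergence\<close>

lemma fdiv_pt_ge_line:
  assumes f: "convex_on {0<..} f" and line: "\<And>t. 0 < t \<Longrightarrow> s * t + b \<le> f t"
    and "0 \<le> p" "0 \<le> q"
  shows "ereal (s * p + b * q) \<le> fdiv_pt f p q"
proof (cases "0 < q")
  case True
  show ?thesis
  proof (cases "0 < p")
    case True
    have "q * (s * (p / q) + b) \<le> q * f (p / q)"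
      using line[of "p / q"] True \<open>0 < q\<close> by (intro mult_left_mono) auto
    moreover have "q * (s * (p / q) + b) = s * p + b * q"
      using \<open>0 < q\<close> by (simp add: field_simps)
    ultimately have "s * p + b * q \<le> q * f (p / q)" by linarith
    then show ?thesis using True \<open>0 < q\<close> by (simp add: fdiv_pt_def)
  next
    case False
    then show ?thesis
      using ereal_mult_left_mono[OF f_at0_ge_line[OF f line], of "ereal q"] \<open>0 < q\<close> \<open>0 \<le> p\<close>
      by (simp add: fdiv_pt_def mult.commute)
  qed
next
  case False
  then show ?thesis
    using ereal_mult_left_mono[OF f_slope_ge_line[OF f line], of "ereal p"] assms(3,4)
    by (auto simp: fdiv_pt_def mult.commute)
qed

lemma fdiv_pt_le_line:
  assumes "0 \<le> lo" "0 \<le> q" "lo * q \<le> p" "p \<le> hi * q"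
    and line: "\<And>t. 0 < t \<Longrightarrow> lo \<le> t \<Longrightarrow> t \<le> hi \<Longrightarrow> f t \<le> c + m * t"
    and at0: "lo = 0 \<Longrightarrow> f_at0 f \<le> ereal c"
  shows "fdiv_pt f p q \<le> ereal (c * q + m * p)"
proof -
  have "0 \<le> p" using assms by (metis mult_nonneg_nonneg order_trans)
  consider "q = 0" | "0 < q" "0 < p" | "0 < q" "p = 0"
    using \<open>0 \<le> p\<close> \<open>0 \<le> q\<close> by fastforce
  then show ?thesis
  proof cases
    case 1
    then show ?thesis using assms by (simp add: fdiv_pt_def)
  next
    case 2
    have "lo \<le> p / q" "p / q \<le> hi" using assms 2 by (auto simp: field_simps)
    then have "q * f (p / q) \<le> q * (c + m * (p / q))"
      using line[of "p / q"] 2 by (intro mult_left_mono) auto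
    moreover have "q * (c + m * (p / q)) = c * q + m * p"
      using 2 by (simp add: field_simps)
    ultimately have "q * f (p / q) \<le> c * q + m * p" by linarith
    then show ?thesis using 2 by (simp add: fdiv_pt_def)
  next
    case 3
    then have "lo = 0" using assms by (simp add: mult_le_0_iff)
    then show ?thesis
      using ereal_mult_left_mono[OF at0, of "ereal q"] 3 by (simp add: fdiv_pt_def mult.commute)
  qed
qed

lemma fdiv_pt_zero_ge:
  assumes "ereal b \<le> f_at0 f" "0 \<le> q"
  shows "ereal (b * q) \<le> fdiv_pt f 0 q"
  using ereal_mult_left_mono[OF assms(1), of "ereal q"] assms(2)
  by (auto simp: fdiv_pt_def mult.commute)

section \<open>f-divergences as integrals against P + Q\<close>

lemma ereal_eq_infinity_if_above_affine:
  fixes x :: ereal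
  assumes "0 < c" and above: "\<And>B. b \<le> B \<Longrightarrow> ereal (a + c * B) \<le> x"
  shows "x = \<infinity>"
proof (rule ereal_top)
  fix T :: real
  define B where "B = max b ((T - a) / c)"
  have "(T - a) / c \<le> B" by (simp add: B_def)
  then have "T \<le> a + c * B" using \<open>0 < c\<close> by (simp add: pos_divide_le_eq mult.commute)
  also have "ereal (a + c * B) \<le> x" by (rule above) (simp add: B_def)
  finally show "ereal T \<le> x" by simp
qed

definition ereal_integral :: "'a measure \<Rightarrow> ('a \<Rightarrow> ereal) \<Rightarrow> ereal" where
  "ereal_integral M g =
     enn2ereal (\<integral>\<^sup>+ x. e2ennreal (max 0 (g x)) \<partial>M) - enn2ereal (\<integral>\<^sup>+ x. e2ennreal (max 0 (- g x)) \<partial>M)"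

lemma ereal_integral_mono_AE:
  assumes "AE x in M. g x \<le> h x"
  shows "ereal_integral M g \<le> ereal_integral M h"
  unfolding ereal_integral_def
proof (rule ereal_minus_mono)
  show "enn2ereal (\<integral>\<^sup>+ x. e2ennreal (max 0 (g x)) \<partial>M) \<le> enn2ereal (\<integral>\<^sup>+ x. e2ennreal (max 0 (h x)) \<partial>M)"
    unfolding less_eq_ennreal.rep_eq[symmetric]
    using assms by (intro nn_integral_mono_AE, elim AE_mp) (auto intro!: AE_I2 e2ennreal_mono max.mono)
  show "enn2ereal (\<integral>\<^sup>+ x. e2ennreal (max 0 (- h x)) \<partial>M) \<le> enn2ereal (\<integral>\<^sup>+ x. e2ennreal (max 0 (- g x)) \<partial>M)"
    unfolding less_eq_ennreal.rep_eq[symmetric]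
    using assms by (intro nn_integral_mono_AE, elim AE_mp) (auto intro!: AE_I2 e2ennreal_mono max.mono)
qed

lemma ereal_integral_real:
  assumes h: "integrable M h"
  shows "ereal_integral M (\<lambda>x. ereal (h x)) = ereal (integral\<^sup>L M h)"
proof -
  have e2: "e2ennreal (max 0 (ereal r)) = ennreal r" for r
    by (cases "r \<le> 0") (auto simp: max_def e2ennreal_ereal ennreal_neg zero_ereal_def)
  have e2_neg: "e2ennreal (max 0 (- ereal r)) = ennreal (- r)" for r
    using e2[of "- r"] by simp
  have fin: "a \<noteq> \<top> \<Longrightarrow> enn2ereal a = ereal (enn2real a)" for a
    by (cases a rule: ennreal_cases) (auto simp: enn2ereal_ennreal)
  have "(\<integral>\<^sup>+ x. ennreal (h x) \<partial>M) \<noteq> \<top>" "(\<integral>\<^sup>+ x. ennreal (- h x) \<partial>M) \<noteq> \<top>"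
    using integrableD(2,3)[OF h] by auto
  then show ?thesis
    unfolding ereal_integral_def e2 e2_neg real_lebesgue_integral_def[OF h] by (simp add: fin)
qed

lemma AE_le_if_integral_indicator_le:
  fixes u v :: "'a \<Rightarrow> real"
  assumes u: "integrable M u" and v: "integrable M v"
    and le: "\<And>A. A \<in> sets M \<Longrightarrow> (\<integral>x. u x * indicator A x \<partial>M) \<le> (\<integral>x. v x * indicator A x \<partial>M)"
  shows "AE x in M. u x \<le> v x"
proof -
  define A where "A = {x \<in> space M. v x < u x}"
  have A: "A \<in> sets M" unfolding A_def using u v by measurable
  define w where "w = (\<lambda>x. u x * indicator A x - v x * indicator A x)"
  have w: "integrable M w"
    unfolding w_def using integrable_mult_indicator[OF A u] integrable_mult_indicator[OF A v]
    by (simp add: mult.commute)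
  have w_nonneg: "0 \<le> w x" for x
    by (auto simp: w_def A_def indicator_def)
  have "integral\<^sup>L M w \<le> 0"
    using le[OF A] integrable_mult_indicator[OF A u] integrable_mult_indicator[OF A v]
    by (simp add: w_def mult.commute)
  moreover have "0 \<le> integral\<^sup>L M w" by (simp add: w_nonneg)
  ultimately have "AE x in M. w x = 0"
    using integral_nonneg_eq_0_iff_AE[OF w] w_nonneg by simp
  then show ?thesis
    by (rule AE_mp) (auto simp: w_def A_def indicator_def intro!: AE_I2)
qed

lemma real_RN_deriv_indicator:
  assumes M: "finite_measure M" and N: "finite_measure N"
    and ac: "absolutely_continuous M N" and sets: "sets N = sets M" and A: "A \<in> sets M"
  shows "integrable M (\<lambda>x. enn2real (RN_deriv M N x) * indicator A x)"
    and "(\<integral>x. enn2real (RN_deriv M N x) * indicator A x \<partial>M) = measure N A"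
proof -
  interpret M: finite_measure M by fact
  interpret N: finite_measure N by fact
  have "integrable N (indicator A :: _ \<Rightarrow> real)"
    using A sets by (auto simp: less_top[symmetric])
  then show "integrable M (\<lambda>x. enn2real (RN_deriv M N x) * indicator A x)"
    using M.RN_deriv_integrable[OF N.sigma_finite_measure_axioms ac sets] A by simp
  show "(\<integral>x. enn2real (RN_deriv M N x) * indicator A x \<partial>M) = measure N A"
    using M.RN_deriv_integral[OF N.sigma_finite_measure_axioms ac sets, of "indicator A"] A sets
    by (simp add: Int_absorb2 sets.sets_into_space)
qed

definition sum_measure :: "'a measure \<Rightarrow> 'a measure \<Rightarrow> 'a measure" where
  "sum_measure P Q = measure_of (space P) (sets P) (\<lambda>A. emeasure P A + emeasure Q A)"

locale two_prob_spaces = P: prob_space P + Q: prob_space Q for P Q :: "'a measure" +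
  assumes sets_Q: "sets Q = sets P"
begin

abbreviation \<nu> where "\<nu> \<equiv> sum_measure P Q"

definition p where "p x = enn2real (RN_deriv \<nu> P x)"

definition q where "q x = enn2real (RN_deriv \<nu> Q x)"

lemma space_Q: "space Q = space P"
  using sets_Q by (rule sets_eq_imp_space_eq)

lemma sets_\<nu> [simp]: "sets \<nu> = sets P" and space_\<nu> [simp]: "space \<nu> = space P"
  by (simp_all add: sum_measure_def sets.space_closed)

lemma emeasure_\<nu>: "A \<in> sets P \<Longrightarrow> emeasure \<nu> A = emeasure P A + emeasure Q A"
  unfolding sum_measure_def
proof (rule emeasure_measure_of_sigma[OF sets.sigma_algebra_axioms])
  show "positive (sets P) (\<lambda>A. emeasure P A + emeasure Q A)"
    by (simp add: positive_def)
  show "countably_additive (sets P) (\<lambda>A. emeasure P A + emeasure Q A)"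
    using sets_Q
    by (auto simp: countably_additive_def suminf_add[symmetric] suminf_emeasure simp del: suminf_add)
qed

lemma finite_measure_\<nu>: "finite_measure \<nu>"
  by (rule finite_measureI) (simp add: emeasure_\<nu> space_Q P.emeasure_finite Q.emeasure_finite[unfolded space_Q])

lemma ac_P: "absolutely_continuous \<nu> P" and ac_Q: "absolutely_continuous \<nu> Q"
  by (auto simp: absolutely_continuous_def null_sets_def emeasure_\<nu> sets_Q)

lemma p_nonneg: "0 \<le> p x" and q_nonneg: "0 \<le> q x"
  by (simp_all add: p_def q_def)

lemma
  assumes "A \<in> sets P"
  shows integrable_p_indicator: "integrable \<nu> (\<lambda>x. p x * indicator A x)"
    and integral_p_indicator: "(\<integral>x. p x * indicator A x \<partial>\<nu>) = measure P A"
    and integrable_q_indicator: "integrable \<nu> (\<lambda>x. q x * indicator A x)"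
    and integral_q_indicator: "(\<integral>x. q x * indicator A x \<partial>\<nu>) = measure Q A"
  unfolding p_def q_def
  using real_RN_deriv_indicator[OF finite_measure_\<nu> P.finite_measure_axioms ac_P, of A]
    real_RN_deriv_indicator[OF finite_measure_\<nu> Q.finite_measure_axioms ac_Q, of A] assms sets_Q
  by simp_all

lemma integral_line:
  assumes "A \<in> sets P"
  shows "(\<integral>x. (s * p x + b * q x) * indicator A x \<partial>\<nu>) = s * measure P A + b * measure Q A"
  using integrable_p_indicator[OF assms] integrable_q_indicator[OF assms]
  by (simp add: distrib_right mult.assoc integral_p_indicator[OF assms] integral_q_indicator[OF assms])

lemma integrable_line: "A \<in> sets P \<Longrightarrow> integrable \<nu> (\<lambda>x. (s * p x + b * q x) * indicator A x)"
  using integrable_p_indicator integrable_q_indicator by (simp add: distrib_right mult.assoc)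

lemma integrable_p: "integrable \<nu> p" and integrable_q: "integrable \<nu> q"
proof -
  have "integrable \<nu> (\<lambda>x. p x * indicator (space P) x) = integrable \<nu> p"
    by (rule Bochner_Integration.integrable_cong) simp_all
  moreover have "integrable \<nu> (\<lambda>x. q x * indicator (space P) x) = integrable \<nu> q"
    by (rule Bochner_Integration.integrable_cong) simp_all
  ultimately show "integrable \<nu> p" "integrable \<nu> q"
    using integrable_p_indicator[OF sets.top] integrable_q_indicator[OF sets.top] by simp_all
qed

lemma AE_p_le:
  assumes "\<And>A. A \<in> sets P \<Longrightarrow> measure P A \<le> c * measure Q A"
  shows "AE x in \<nu>. p x \<le> c * q x"
  using integrable_p integrable_q
  by (intro AE_le_if_integral_indicator_le)
    (auto simp: assms integral_p_indicator mult.assoc integral_q_indicator)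

lemma AE_p_ge:
  assumes "\<And>A. A \<in> sets P \<Longrightarrow> c * measure Q A \<le> measure P A"
  shows "AE x in \<nu>. c * q x \<le> p x"
  using integrable_p integrable_q
  by (intro AE_le_if_integral_indicator_le)
    (auto simp: assms integral_p_indicator mult.assoc integral_q_indicator)

lemma AE_p_eq_0:
  assumes "B \<in> sets P" "measure P B = 0"
  shows "AE x in \<nu>. x \<in> B \<longrightarrow> p x = 0"
proof -
  have "AE x in \<nu>. p x * indicator B x = 0"
    using integral_nonneg_eq_0_iff_AE[OF integrable_p_indicator[OF assms(1)]] assms
    by (simp add: integral_p_indicator p_nonneg)
  then show ?thesis by (rule AE_mp) (auto intro!: AE_I2)
qed

lemma fdiv_eq_ereal_integral: "fdiv f P Q = ereal_integral \<nu> (\<lambda>x. fdiv_pt f (p x) (q x))"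
  unfolding fdiv_def Let_def ereal_integral_def sum_measure_def p_def q_def ..

lemma fdiv_ge_integral:
  assumes "integrable \<nu> h" "AE x in \<nu>. ereal (h x) \<le> fdiv_pt f (p x) (q x)"
  shows "ereal (integral\<^sup>L \<nu> h) \<le> fdiv f P Q"
  unfolding fdiv_eq_ereal_integral ereal_integral_real[OF assms(1), symmetric]
  using assms(2) by (rule ereal_integral_mono_AE)

lemma fdiv_le_integral:
  assumes "integrable \<nu> h" "AE x in \<nu>. fdiv_pt f (p x) (q x) \<le> ereal (h x)"
  shows "fdiv f P Q \<le> ereal (integral\<^sup>L \<nu> h)"
  unfolding fdiv_eq_ereal_integral ereal_integral_real[OF assms(1), symmetric]
  using assms(2) by (rule ereal_integral_mono_AE)

lemma fdiv_ge_lines: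
  assumes f: "convex_on {0<..} f" and A: "A \<in> sets P"
    and line_A: "\<And>t. 0 < t \<Longrightarrow> s2 * t + b2 \<le> f t"
    and line_off_A: "AE x in \<nu>. x \<notin> A \<longrightarrow> ereal (s1 * p x + b1 * q x) \<le> fdiv_pt f (p x) (q x)"
  shows "ereal (s2 * measure P A + b2 * measure Q A + s1 * (1 - measure P A) + b1 * (1 - measure Q A))
    \<le> fdiv f P Q"
proof -
  have B: "space P - A \<in> sets P" using A by auto
  define h where "h = (\<lambda>x. (s2 * p x + b2 * q x) * indicator A x
    + (s1 * p x + b1 * q x) * indicator (space P - A) x)"
  have "ereal (integral\<^sup>L \<nu> h) \<le> fdiv f P Q"
  proof (rule fdiv_ge_integral)
    show "integrable \<nu> h" unfolding h_def using integrable_line[OF A] integrable_line[OF B] by simp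
    show "AE x in \<nu>. ereal (h x) \<le> fdiv_pt f (p x) (q x)"
      using line_off_A AE_space
    proof eventually_elim
      case (elim x)
      then show ?case
        using fdiv_pt_ge_line[OF f line_A p_nonneg q_nonneg] by (cases "x \<in> A") (auto simp: h_def)
    qed
  qed
  moreover have "integral\<^sup>L \<nu> h = s2 * measure P A + b2 * measure Q A
      + s1 * measure P (space P - A) + b1 * measure Q (space P - A)"
    unfolding h_def using integrable_line[OF A] integrable_line[OF B]
    by (simp add: integral_line[OF A] integral_line[OF B])
  moreover have "measure P (space P - A) = 1 - measure P A" "measure Q (space P - A) = 1 - measure Q A"
    using P.prob_compl[OF A] Q.prob_compl[of A] A sets_Q space_Q by simp_all
  ultimately show ?thesis by simp
qed

lemma fdiv_le_line:
  assumes "0 \<le> lo"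
    and lo: "\<And>A. A \<in> sets P \<Longrightarrow> lo * measure Q A \<le> measure P A"
    and hi: "\<And>A. A \<in> sets P \<Longrightarrow> measure P A \<le> hi * measure Q A"
    and line: "\<And>t. 0 < t \<Longrightarrow> lo \<le> t \<Longrightarrow> t \<le> hi \<Longrightarrow> f t \<le> c + m * t"
    and at0: "lo = 0 \<Longrightarrow> f_at0 f \<le> ereal c"
  shows "fdiv f P Q \<le> ereal (c + m)"
proof -
  have ae_lo: "AE x in \<nu>. lo * q x \<le> p x" by (rule AE_p_ge) (rule lo)
  have ae_hi: "AE x in \<nu>. p x \<le> hi * q x" by (rule AE_p_le) (rule hi)
  have "fdiv f P Q \<le> ereal (integral\<^sup>L \<nu> (\<lambda>x. (m * p x + c * q x) * indicator (space P) x))"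
  proof (rule fdiv_le_integral)
    show "integrable \<nu> (\<lambda>x. (m * p x + c * q x) * indicator (space P) x)"
      by (rule integrable_line) simp
    show "AE x in \<nu>. fdiv_pt f (p x) (q x) \<le> ereal ((m * p x + c * q x) * indicator (space P) x)"
      using ae_lo ae_hi AE_space
    proof eventually_elim
      case (elim x)
      have "fdiv_pt f (p x) (q x) \<le> ereal (c * q x + m * p x)"
        by (rule fdiv_pt_le_line[OF \<open>0 \<le> lo\<close> q_nonneg elim(1,2) line at0])
      then show ?case using elim(3) by (simp add: add.commute)
    qed
  qed
  moreover have "(\<integral>x. (m * p x + c * q x) * indicator (space P) x \<partial>\<nu>) = c + m"
    by (simp add: integral_line Q.prob_space[unfolded space_Q] P.prob_space)
  ultimately show ?thesis by simp
qed

lemma fdiv_nonneg: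
  assumes f: "convex_on {0<..} f" and f1: "f 1 = 0"
  shows "0 \<le> fdiv f P Q"
proof -
  obtain s where s: "\<And>t. 0 < t \<Longrightarrow> f 1 + s * (t - 1) \<le> f t"
    using convex_on_supporting_line[OF f zero_less_one] by metis
  have "ereal (s * measure P (space P) + (- s) * measure Q (space P) + s * (1 - measure P (space P))
      + (- s) * (1 - measure Q (space P))) \<le> fdiv f P Q"
    using s f1 by (intro fdiv_ge_lines[OF f]) (auto simp: algebra_simps)
  then show ?thesis by (simp add: zero_ereal_def P.prob_space Q.prob_space[unfolded space_Q])
qed

lemma fdiv_le_chord_value:
  assumes f: "convex_on {0<..} f" and r: "0 \<le> r1" "r1 < 1" "1 < r2"
    and lo: "\<And>A. A \<in> sets P \<Longrightarrow> r1 * measure Q A \<le> measure P A"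
    and hi: "\<And>A. A \<in> sets P \<Longrightarrow> measure P A \<le> r2 * measure Q A"
  shows "fdiv f P Q \<le> chord_value f r1 r2"
proof (cases "f_ext f r1")
  case (real F1)
  define m where "m = (f r2 - F1) / (r2 - r1)"
  have "fdiv f P Q \<le> ereal ((F1 - m * r1) + m)"
  proof (rule fdiv_le_line[OF r(1) lo hi])
    show "f t \<le> (F1 - m * r1) + m * t" if "0 < t" "r1 \<le> t" "t \<le> r2" for t
    proof -
      have "f t \<le> F1 + m * (t - r1)"
        using convex_on_le_chord_f_ext[OF f real r(1) that(2,3,1)] r unfolding m_def by simp
      then show ?thesis by (simp add: algebra_simps)
    qed
    show "r1 = 0 \<Longrightarrow> f_at0 f \<le> ereal (F1 - m * r1)"
      using real by (simp add: f_ext_def)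
  qed
  also have "(F1 - m * r1) + m = (1 - r1) / (r2 - r1) * f r2 + (1 - (1 - r1) / (r2 - r1)) * F1"
    using r by (simp add: m_def field_simps)
  finally show ?thesis using chord_value_eq[OF r(2,3) real] by simp
next
  case PInf
  have "0 < (r2 - 1) / (r2 - r1)" using r by simp
  then show ?thesis using r PInf by (simp add: chord_value_def f_ext_def)
next
  case MInf
  then show ?thesis using f_ext_neq_MInf[OF f r(1)] by simp
qed

lemma fdiv_ge_tangent_lines:
  assumes f: "convex_on {0<..} f" and A: "A \<in> sets P"
    and tangent: "\<And>t. 0 < t \<Longrightarrow> s2 * t + b2 \<le> f t"
    and off_A: "AE x in \<nu>. x \<notin> A \<longrightarrow> ereal (s1 * p x + b1 * q x) \<le> fdiv_pt f (p x) (q x)"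
    and "b2 \<le> b1" and PA: "measure P A = \<theta> * r2" "1 - \<theta> * r2 = (1 - \<theta>) * r1"
    and QA: "measure Q A \<le> \<theta>"
  shows "ereal (\<theta> * (s2 * r2 + b2) + (1 - \<theta>) * (s1 * r1 + b1)) \<le> fdiv f P Q"
proof -
  have "0 \<le> (b1 - b2) * (\<theta> - measure Q A)" using assms by simp
  then have "\<theta> * (s2 * r2 + b2) + (1 - \<theta>) * (s1 * r1 + b1)
      \<le> s2 * measure P A + b2 * measure Q A + s1 * (1 - measure P A) + b1 * (1 - measure Q A)"
    unfolding PA by (simp add: algebra_simps)
  also note fdiv_ge_lines[OF f A tangent off_A]
  finally show ?thesis by simp
qed

lemma fdiv_ge_chord_value_pos:
  assumes f: "convex_on {0<..} f" and r: "0 < r1" "r1 < 1" "1 < r2" and A: "A \<in> sets P"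
    and PA: "measure P A = (1 - r1) / (r2 - r1) * r2" and QA: "measure Q A \<le> (1 - r1) / (r2 - r1)"
  shows "chord_value f r1 r2 \<le> fdiv f P Q"
proof -
  define \<theta> where "\<theta> = (1 - r1) / (r2 - r1)"
  have PA': "measure P A = \<theta> * r2" "1 - \<theta> * r2 = (1 - \<theta>) * r1"
    using r by (auto simp: \<theta>_def PA field_simps)
  obtain s2 where tangent2: "\<And>t. 0 < t \<Longrightarrow> f r2 + s2 * (t - r2) \<le> f t"
    and left2: "\<And>t. 0 < t \<Longrightarrow> t < r2 \<Longrightarrow> (f r2 - f t) / (r2 - t) \<le> s2"
    using convex_on_supporting_line[OF f, of r2] r by (metis less_trans zero_less_one)
  obtain s1 where tangent1: "\<And>t. 0 < t \<Longrightarrow> f r1 + s1 * (t - r1) \<le> f t"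
    and right1: "\<And>u. r1 < u \<Longrightarrow> s1 \<le> (f u - f r1) / (u - r1)"
    using convex_on_supporting_line[OF f r(1)] by metis
  define m where "m = (f r2 - f r1) / (r2 - r1)"
  have m: "s1 \<le> m" "m \<le> s2" "m * (r2 - r1) = f r2 - f r1"
    using right1[of r2] left2[of r1] r by (auto simp: m_def)
  have "f r2 - f r1 \<le> s2 * (r2 - r1)"
    using mult_right_mono[OF m(2), of "r2 - r1"] m(3) r by simp
  moreover have "s1 * r1 \<le> s2 * r1"
    using m r by (intro mult_right_mono) auto
  ultimately have b_le: "f r2 - s2 * r2 \<le> f r1 - s1 * r1"
    by (simp add: right_diff_distrib)
  have off_A: "AE x in \<nu>. x \<notin> A \<longrightarrow>
      ereal (s1 * p x + (f r1 - s1 * r1) * q x) \<le> fdiv_pt f (p x) (q x)"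
    using tangent1 by (intro AE_I2 impI fdiv_pt_ge_line[OF f] p_nonneg q_nonneg) (simp add: algebra_simps)
  have "\<And>t. 0 < t \<Longrightarrow> s2 * t + (f r2 - s2 * r2) \<le> f t"
    using tangent2 by (simp add: algebra_simps)
  from fdiv_ge_tangent_lines[OF f A this off_A b_le PA' QA[folded \<theta>_def]]
  have "ereal (\<theta> * f r2 + (1 - \<theta>) * f r1) \<le> fdiv f P Q" by simp
  then show ?thesis
    using chord_value_eq[OF r(2,3), of f "f r1"] r by (simp add: \<theta>_def f_ext_def)
qed

text \<open>Here \<open>P\<close> is concentrated on \<open>A\<close>, so off \<open>A\<close> only the value \<open>f(0+)\<close> enters, not a
  tangent line at \<open>0\<close> (which need not exist).\<close>

lemma fdiv_ge_chord_value_0: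
  assumes f: "convex_on {0<..} f" and r2: "1 < r2" and A: "A \<in> sets P"
    and PA: "measure P A = 1" and QA: "measure Q A \<le> 1 / r2"
  shows "chord_value f 0 r2 \<le> fdiv f P Q"
proof -
  obtain s2 where "\<And>t. 0 < t \<Longrightarrow> f r2 + s2 * (t - r2) \<le> f t"
    using convex_on_supporting_line[OF f, of r2] r2 by (metis less_trans zero_less_one)
  then have tangent2: "\<And>t. 0 < t \<Longrightarrow> s2 * t + (f r2 - s2 * r2) \<le> f t"
    by (simp add: algebra_simps)
  have "measure P (space P - A) = 0"
    using P.prob_compl[OF A] PA by simp
  then have "AE x in \<nu>. x \<in> space P - A \<longrightarrow> p x = 0"
    using A by (intro AE_p_eq_0) auto
  then have p0: "AE x in \<nu>. x \<notin> A \<longrightarrow> p x = 0"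
    using AE_space by eventually_elim auto
  have lower: "ereal (f r2 / r2 + (1 - 1 / r2) * B) \<le> fdiv f P Q"
    if "f r2 - s2 * r2 \<le> B" "ereal B \<le> f_at0 f" for B
  proof -
    have "AE x in \<nu>. x \<notin> A \<longrightarrow> ereal (0 * p x + B * q x) \<le> fdiv_pt f (p x) (q x)"
      using p0 by eventually_elim (auto simp: fdiv_pt_zero_ge[OF that(2) q_nonneg])
    from fdiv_ge_tangent_lines[OF f A tangent2 this that(1), of "1 / r2" r2 0] PA QA r2
    show ?thesis by simp
  qed
  have "ereal (f r2 - s2 * r2) \<le> f_at0 f" by (rule f_at0_ge_line[OF f tangent2])
  then consider "f_at0 f = \<infinity>" | F0 where "f_at0 f = ereal F0" "f r2 - s2 * r2 \<le> F0"
    by (cases "f_at0 f") auto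
  then show ?thesis
  proof cases
    case 1
    have "fdiv f P Q = \<infinity>"
      using r2 lower 1
      by (intro ereal_eq_infinity_if_above_affine[of "1 - 1 / r2" "f r2 - s2 * r2" "f r2 / r2"]) simp_all
    then show ?thesis by simp
  next
    case 2
    then show ?thesis
      using lower[of F0] chord_value_eq[of 0 r2 f F0] r2 by (simp add: f_ext_def)
  qed
qed

lemma fdiv_ge_chord_value:
  assumes f: "convex_on {0<..} f" and r: "0 \<le> r1" "r1 < 1" "1 < r2" and A: "A \<in> sets P"
    and PA: "measure P A = (1 - r1) / (r2 - r1) * r2" and QA: "measure Q A \<le> (1 - r1) / (r2 - r1)"
  shows "chord_value f r1 r2 \<le> fdiv f P Q"
proof (cases "r1 = 0")
  case True
  then show ?thesis using fdiv_ge_chord_value_0[OF f r(3) A] PA QA r by simp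
next
  case False
  then show ?thesis using fdiv_ge_chord_value_pos[OF f _ r(2,3) A PA QA] r by simp
qed

end

lemma two_prob_spacesI: "prob_space P \<Longrightarrow> prob_space Q \<Longrightarrow> sets Q = sets P \<Longrightarrow> two_prob_spaces P Q"
  by (simp add: two_prob_spaces_def two_prob_spaces_axioms_def)

section \<open>Densities bounded by c1 and c2, and mixtures\<close>

lemma Ptilde_prob_space: "P \<in> Ptilde c1 c2 \<mu> \<Longrightarrow> prob_space P"
  and sets_Ptilde: "P \<in> Ptilde c1 c2 \<mu> \<Longrightarrow> sets P = sets \<mu>"
  by (simp_all add: Ptilde_def)

lemma Ptilde_measure_bounds:
  assumes \<mu>: "prob_space \<mu>" and P: "P \<in> Ptilde c1 c2 \<mu>" and "0 \<le> c1" "c1 \<le> c2" and A: "A \<in> sets \<mu>"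
  shows "c1 * measure \<mu> A \<le> measure P A" "measure P A \<le> c2 * measure \<mu> A"
proof -
  interpret \<mu>: prob_space \<mu> by fact
  have P': "prob_space P" "sets P = sets \<mu>" "absolutely_continuous \<mu> P"
    and ae: "AE x in \<mu>. ennreal c1 \<le> RN_deriv \<mu> P x \<and> RN_deriv \<mu> P x \<le> ennreal c2"
    using P unfolding Ptilde_def by auto
  interpret P: prob_space P by fact
  have eP: "emeasure P A = (\<integral>\<^sup>+x. RN_deriv \<mu> P x * indicator A x \<partial>\<mu>)"
    using A by (subst \<mu>.density_RN_deriv[OF P'(3,2), symmetric]) (simp add: emeasure_density)
  have "AE x in \<mu>. ennreal c1 * indicator A x \<le> RN_deriv \<mu> P x * indicator A x"
    "AE x in \<mu>. RN_deriv \<mu> P x * indicator A x \<le> ennreal c2 * indicator A x"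
    using ae by (eventually_elim, auto intro: mult_right_mono)+
  then have "(\<integral>\<^sup>+x. ennreal c1 * indicator A x \<partial>\<mu>) \<le> emeasure P A"
    "emeasure P A \<le> (\<integral>\<^sup>+x. ennreal c2 * indicator A x \<partial>\<mu>)"
    unfolding eP by (simp_all add: nn_integral_mono_AE)
  then have "ennreal (c1 * measure \<mu> A) \<le> ennreal (measure P A)"
    "ennreal (measure P A) \<le> ennreal (c2 * measure \<mu> A)"
    using A P'(2) assms(3,4)
    by (simp_all add: nn_integral_cmult_indicator \<mu>.emeasure_eq_measure P.emeasure_eq_measure ennreal_mult)
  then show "c1 * measure \<mu> A \<le> measure P A" "measure P A \<le> c2 * measure \<mu> A"
    using assms(3,4) by (simp_all add: ennreal_le_iff)
qed

lemma
  fixes P \<mu> :: "'a measure"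
  assumes P: "prob_space P" and \<mu>: "prob_space \<mu>" and sets_P: "sets P = sets \<mu>"
    and l: "0 \<le> l" "l \<le> 1"
  shows sets_mixture: "sets (mixture l P \<mu>) = sets \<mu>"
    and measure_mixture: "\<And>A. A \<in> sets \<mu> \<Longrightarrow> measure (mixture l P \<mu>) A = l * measure P A + (1 - l) * measure \<mu> A"
    and prob_space_mixture: "prob_space (mixture l P \<mu>)"
proof -
  interpret P: prob_space P by fact
  interpret \<mu>: prob_space \<mu> by fact
  show "sets (mixture l P \<mu>) = sets \<mu>"
    by (simp add: mixture_def sets.space_closed)
  have space: "space (mixture l P \<mu>) = space \<mu>"
    by (simp add: mixture_def sets.space_closed)
  have "emeasure (mixture l P \<mu>) A = ennreal l * emeasure P A + ennreal (1 - l) * emeasure \<mu> A"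
    if "A \<in> sets \<mu>" for A
    unfolding mixture_def
  proof (rule emeasure_measure_of_sigma[OF sets.sigma_algebra_axioms _ _ that])
    show "positive (sets \<mu>) (\<lambda>A. ennreal l * emeasure P A + ennreal (1 - l) * emeasure \<mu> A)"
      by (simp add: positive_def)
    show "countably_additive (sets \<mu>) (\<lambda>A. ennreal l * emeasure P A + ennreal (1 - l) * emeasure \<mu> A)"
      using sets_P
      by (auto simp: countably_additive_def suminf_add[symmetric] ennreal_suminf_cmult suminf_emeasure
          simp del: suminf_add)
  qed
  then have em: "emeasure (mixture l P \<mu>) A = ennreal (l * measure P A + (1 - l) * measure \<mu> A)"
    if "A \<in> sets \<mu>" for A
    using that l sets_P by (simp add: P.emeasure_eq_measure \<mu>.emeasure_eq_measure ennreal_mult ennreal_plus)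
  show "measure (mixture l P \<mu>) A = l * measure P A + (1 - l) * measure \<mu> A" if "A \<in> sets \<mu>" for A
    unfolding measure_def em[OF that] using l by (intro enn2real_ennreal add_nonneg_nonneg) simp_all
  show "prob_space (mixture l P \<mu>)"
    by (rule prob_spaceI)
      (simp add: space em P.prob_space[unfolded sets_eq_imp_space_eq[OF sets_P]] \<mu>.prob_space)
qed

lemma measure_mixture_Ptilde:
  assumes "prob_space \<mu>" "P \<in> Ptilde c1 c2 \<mu>" "0 \<le> l" "l \<le> 1" "A \<in> sets \<mu>"
  shows "measure (mixture l P \<mu>) A = l * measure P A + (1 - l) * measure \<mu> A"
  using measure_mixture[OF Ptilde_prob_space[OF assms(2)] assms(1) sets_Ptilde[OF assms(2)]] assms(3-5) .

lemma density_two_valued_in_Ptilde: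
  fixes \<mu> :: "'a measure"
  assumes \<mu>: "prob_space \<mu>" and A: "A \<in> sets \<mu>" and "0 \<le> c1" "c1 \<le> c2"
    and total: "c2 * measure \<mu> A + c1 * (1 - measure \<mu> A) = 1"
  defines "P \<equiv> density \<mu> (\<lambda>x. ennreal (if x \<in> A then c2 else c1))"
  shows "P \<in> Ptilde c1 c2 \<mu>" "measure P A = c2 * measure \<mu> A"
proof -
  interpret \<mu>: prob_space \<mu> by fact
  define g where "g = (\<lambda>x. ennreal (if x \<in> A then c2 else c1))"
  have g[measurable]: "g \<in> borel_measurable \<mu>"
    unfolding g_def using A by measurable
  have emeasure_P: "emeasure P B = ennreal (c2 * measure \<mu> (A \<inter> B) + c1 * measure \<mu> (B - A))"
    if B: "B \<in> sets \<mu>" for B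
  proof -
    have "emeasure P B = (\<integral>\<^sup>+x. g x * indicator B x \<partial>\<mu>)"
      unfolding P_def g_def[symmetric] by (rule emeasure_density[OF g B])
    also have "\<dots> = (\<integral>\<^sup>+x. ennreal c2 * indicator (A \<inter> B) x + ennreal c1 * indicator (B - A) x \<partial>\<mu>)"
      by (intro nn_integral_cong) (auto simp: g_def indicator_def)
    also have "\<dots> = ennreal c2 * emeasure \<mu> (A \<inter> B) + ennreal c1 * emeasure \<mu> (B - A)"
      using A B by (subst nn_integral_add) (auto simp: nn_integral_cmult_indicator)
    also have "\<dots> = ennreal (c2 * measure \<mu> (A \<inter> B) + c1 * measure \<mu> (B - A))"
      using assms(3,4) by (simp add: \<mu>.emeasure_eq_measure ennreal_mult ennreal_plus)
    finally show ?thesis .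
  qed
  have "emeasure P (space P) = 1"
    using emeasure_P[of "space \<mu>"] total A by (simp add: P_def \<mu>.prob_compl Int_absorb2 sets.sets_into_space)
  then have "prob_space P" by (rule prob_spaceI)
  then show "measure P A = c2 * measure \<mu> A"
    using emeasure_P[OF A] assms(3,4) by (simp add: measure_def)
  have "AE x in \<mu>. g x = RN_deriv \<mu> P x"
    unfolding P_def g_def[symmetric] by (rule \<mu>.RN_deriv_unique[OF g refl])
  then have "AE x in \<mu>. ennreal c1 \<le> RN_deriv \<mu> P x \<and> RN_deriv \<mu> P x \<le> ennreal c2"
  proof eventually_elim
    case (elim x)
    then show ?case using assms(3,4) unfolding g_def by (cases "x \<in> A") (metis ennreal_leI order_refl)+
  qed
  moreover have "absolutely_continuous \<mu> P"
    unfolding P_def g_def[symmetric] by (rule absolutely_continuousI_density[OF g])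
  ultimately show "P \<in> Ptilde c1 c2 \<mu>"
    using \<open>prob_space P\<close> by (simp add: Ptilde_def P_def)
qed

lemma decomposable_disjoint_family:
  assumes "decomposable \<mu> \<alpha> t 1"
  obtains A where "\<And>i. i \<in> {1..t} \<Longrightarrow> A i \<in> sets \<mu>" "\<And>i. i \<in> {1..t} \<Longrightarrow> measure \<mu> (A i) = \<alpha>"
    "disjoint_family_on A {1..t}"
proof -
  obtain A where A: "\<And>i. i \<in> {1..t} \<Longrightarrow> A i \<in> sets \<mu> \<and> measure \<mu> (A i) = \<alpha>"
    and card: "\<And>x. x \<in> space \<mu> \<Longrightarrow> card {i \<in> {1..t}. x \<in> A i} \<le> 1"
    using assms unfolding decomposable_def by blast
  have "A i \<inter> A j = {}" if "i \<in> {1..t}" "j \<in> {1..t}" "i \<noteq> j" for i j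
  proof (rule ccontr)
    assume "A i \<inter> A j \<noteq> {}"
    then obtain x where x: "x \<in> A i" "x \<in> A j" by auto
    then have "x \<in> space \<mu>" using A[OF that(1)] sets.sets_into_space by blast
    moreover have "card {i, j} \<le> card {i \<in> {1..t}. x \<in> A i}"
      using that x by (intro card_mono) auto
    ultimately show False using card that(3) by fastforce
  qed
  then show ?thesis using that A unfolding disjoint_family_on_def by blast
qed

lemma Ptilde_family_from_decomposition:
  assumes \<mu>: "prob_space \<mu>" and c: "0 \<le> c1" "c1 < c2"
    and dec: "decomposable \<mu> ((1 - c1) / (c2 - c1)) k 1"
  obtains A P where "\<And>i. i \<in> {1..k} \<Longrightarrow> A i \<in> sets \<mu>" "disjoint_family_on A {1..k}"
    "\<And>i. i \<in> {1..k} \<Longrightarrow> P i \<in> Ptilde c1 c2 \<mu>"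
    "\<And>i. i \<in> {1..k} \<Longrightarrow> measure (P i) (A i) = c2 * ((1 - c1) / (c2 - c1))"
proof -
  define \<alpha> where "\<alpha> = (1 - c1) / (c2 - c1)"
  obtain A where A: "\<And>i. i \<in> {1..k} \<Longrightarrow> A i \<in> sets \<mu>" "\<And>i. i \<in> {1..k} \<Longrightarrow> measure \<mu> (A i) = \<alpha>"
    and disj: "disjoint_family_on A {1..k}"
    using decomposable_disjoint_family[OF dec] unfolding \<alpha>_def by metis
  define P where "P i = density \<mu> (\<lambda>x. ennreal (if x \<in> A i then c2 else c1))" for i
  have "\<alpha> * (c2 - c1) = 1 - c1"
    using c unfolding \<alpha>_def by simp
  then have "c2 * \<alpha> + c1 * (1 - \<alpha>) = 1"
    by (simp add: algebra_simps)
  then have "P i \<in> Ptilde c1 c2 \<mu>" "measure (P i) (A i) = c2 * \<alpha>" if "i \<in> {1..k}" for i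
    using density_two_valued_in_Ptilde[OF \<mu> A(1)[OF that] c(1), of c2] A(2)[OF that] c
    unfolding P_def by auto
  with A(1) disj show ?thesis using that unfolding \<alpha>_def by blast
qed

section \<open>Local differential privacy\<close>

lemma mixture_ldp_inequality:
  fixes c1 c2 E l m x y :: real
  assumes c: "0 \<le> c1" "c1 < 1" "1 < c2" and E: "1 \<le> E" and l: "0 \<le> l" "l \<le> 1"
    and x: "x \<le> c2 * m" "x \<le> 1 - c1 * (1 - m)" and y: "c1 * m \<le> y"
    and d: "E - 1 \<le> l * ((1 - c1) * E + c2 - 1)"
  shows "l * x + (1 - l) * m
    \<le> E * (l * y + (1 - l) * m) + (1 - c1) / (c2 - c1) * (l * ((1 - c1) * E + c2 - 1) - (E - 1))"
proof -
  define \<alpha> where "\<alpha> = (1 - c1) / (c2 - c1)"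
  define \<kappa> where "\<kappa> = (E - 1) * (1 - l) + E * l * c1"
  have d_eq: "l * ((1 - c1) * E + c2 - 1) - (E - 1) = l * c2 - \<kappa>"
    by (simp add: \<kappa>_def algebra_simps)
  have "E * (l * (c1 * m)) \<le> E * (l * y)" using y l E by (intro mult_left_mono) auto
  then have "l * x + (1 - l) * m - E * (l * y + (1 - l) * m) \<le> l * x - m * \<kappa>"
    by (simp add: \<kappa>_def algebra_simps)
  also have "\<dots> \<le> \<alpha> * (l * c2 - \<kappa>)"
  proof (cases "m \<le> \<alpha>")
    case True
    have "l * x \<le> l * (c2 * m)" using x l by (intro mult_left_mono) auto
    moreover have "m * (l * c2 - \<kappa>) \<le> \<alpha> * (l * c2 - \<kappa>)"
      using True d d_eq by (intro mult_right_mono) auto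
    ultimately show ?thesis by (simp add: algebra_simps)
  next
    case False
    have "l * x \<le> l * (1 - c1 * (1 - m))" using x l by (intro mult_left_mono) auto
    moreover have "l * c1 - \<kappa> = - ((E - 1) * (1 - l * (1 - c1)))"
      by (simp add: \<kappa>_def algebra_simps)
    moreover have "l * (1 - c1) \<le> 1" using l c by (simp add: mult_le_one)
    then have "0 \<le> (E - 1) * (1 - l * (1 - c1))" using E by simp
    ultimately have "m * (l * c1 - \<kappa>) \<le> \<alpha> * (l * c1 - \<kappa>)"
      using False by (simp add: mult_right_mono)
    moreover have "l * (1 - c1) = \<alpha> * (l * (c2 - c1))"
      using c by (simp add: \<alpha>_def)
    ultimately show ?thesis
      using \<open>l * x \<le> l * (1 - c1 * (1 - m))\<close> by (simp add: algebra_simps)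
  qed
  finally show ?thesis by (simp add: \<alpha>_def d_eq)
qed

lemma ldp_diagonal_sum_le:
  fixes M :: "'i \<Rightarrow> 'i \<Rightarrow> real"
  assumes I: "finite I" and E: "0 \<le> E"
    and ldp: "\<And>i j. i \<in> I \<Longrightarrow> j \<in> I \<Longrightarrow> M i i \<le> E * M j i + \<delta>"
    and col: "\<And>j. j \<in> I \<Longrightarrow> (\<Sum>i\<in>I. M j i) \<le> 1"
  shows "(real (card I) - 1 + E) * (\<Sum>i\<in>I. M i i) \<le> real (card I) * (E + (real (card I) - 1) * \<delta>)"
proof -
  define n where "n = real (card I)"
  have row: "(n - 1 + E) * M i i \<le> E * (\<Sum>j\<in>I. M j i) + (n - 1) * \<delta>" if i: "i \<in> I" for i
  proof -
    have "1 \<le> card I" using i I by (auto simp: Suc_le_eq card_gt_0_iff)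
    then have card: "real (card (I - {i})) = n - 1"
      using i I by (simp add: n_def of_nat_diff)
    have "(n - 1) * M i i = (\<Sum>j\<in>I - {i}. M i i)" by (simp add: card)
    also have "\<dots> \<le> (\<Sum>j\<in>I - {i}. E * M j i + \<delta>)"
      using ldp i by (intro sum_mono) auto
    also have "\<dots> = E * (\<Sum>j\<in>I - {i}. M j i) + (n - 1) * \<delta>"
      by (simp add: sum.distrib sum_distrib_left card)
    also have "(\<Sum>j\<in>I - {i}. M j i) = (\<Sum>j\<in>I. M j i) - M i i"
      using i I by (simp add: sum_diff1)
    finally show ?thesis by (simp add: algebra_simps)
  qed
  have "(n - 1 + E) * (\<Sum>i\<in>I. M i i) = (\<Sum>i\<in>I. (n - 1 + E) * M i i)"
    by (rule sum_distrib_left)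
  also have "\<dots> \<le> (\<Sum>i\<in>I. E * (\<Sum>j\<in>I. M j i) + (n - 1) * \<delta>)"
    by (intro sum_mono row)
  also have "\<dots> = E * (\<Sum>i\<in>I. \<Sum>j\<in>I. M j i) + n * ((n - 1) * \<delta>)"
    by (simp add: sum.distrib sum_distrib_left n_def)
  also have "(\<Sum>i\<in>I. \<Sum>j\<in>I. M j i) = (\<Sum>j\<in>I. \<Sum>i\<in>I. M j i)"
    by (rule sum.swap)
  also have "E * (\<Sum>j\<in>I. \<Sum>i\<in>I. M j i) \<le> E * n"
    using sum_mono[of I "\<lambda>j. \<Sum>i\<in>I. M j i" "\<lambda>_. 1", OF col] E by (simp add: n_def mult_left_mono)
  finally show ?thesis by (simp add: n_def algebra_simps)
qed

lemma ldp_pigeonhole: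
  fixes Q :: "'i \<Rightarrow> 'a measure" and A :: "'i \<Rightarrow> 'a set"
  assumes I: "finite I" "I \<noteq> {}" and E: "0 < E"
    and Q: "\<And>j. j \<in> I \<Longrightarrow> prob_space (Q j)" "\<And>j. j \<in> I \<Longrightarrow> sets (Q j) = sets M"
    and A: "\<And>i. i \<in> I \<Longrightarrow> A i \<in> sets M" "disjoint_family_on A I"
    and ldp: "\<And>i j. i \<in> I \<Longrightarrow> j \<in> I \<Longrightarrow> measure (Q i) (A i) \<le> E * measure (Q j) (A i) + \<delta>"
  shows "\<exists>i\<in>I. measure (Q i) (A i) \<le> (E + (real (card I) - 1) * \<delta>) / (E + real (card I) - 1)"
proof (rule ccontr)
  define n where "n = real (card I)"
  have n: "1 \<le> n" using I by (simp add: n_def Suc_le_eq card_gt_0_iff)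
  have "(\<Sum>i\<in>I. measure (Q j) (A i)) \<le> 1" if j: "j \<in> I" for j
  proof -
    interpret Q: prob_space "Q j" using Q(1)[OF j] .
    have "(\<Sum>i\<in>I. measure (Q j) (A i)) = measure (Q j) (\<Union>i\<in>I. A i)"
      using A Q(2)[OF j] I by (intro Q.finite_measure_finite_Union[symmetric]) auto
    then show ?thesis by simp
  qed
  from ldp_diagonal_sum_le[of I E "\<lambda>j i. measure (Q j) (A i)", OF I(1) _ ldp this] E
  have sum_le: "(n - 1 + E) * (\<Sum>i\<in>I. measure (Q i) (A i)) \<le> n * (E + (n - 1) * \<delta>)"
    by (simp add: n_def)
  define q where "q = (E + (n - 1) * \<delta>) / (E + n - 1)"
  assume "\<not> ?thesis"
  then have "\<And>i. i \<in> I \<Longrightarrow> q < measure (Q i) (A i)"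
    by (auto simp: q_def n_def)
  then have "(\<Sum>i\<in>I. q) < (\<Sum>i\<in>I. measure (Q i) (A i))"
    by (rule sum_strict_mono[OF I])
  then have "(n - 1 + E) * (n * q) < (n - 1 + E) * (\<Sum>i\<in>I. measure (Q i) (A i))"
    using n E by (intro mult_strict_left_mono) (simp_all add: n_def)
  also note sum_le
  also have "n * (E + (n - 1) * \<delta>) = (n - 1 + E) * (n * q)"
    using n E by (simp add: q_def field_simps)
  finally show False by simp
qed

section \<open>The minimax risk\<close>

locale ldp_params =
  fixes c1 c2 \<epsilon> \<delta> :: real
  assumes c1: "0 \<le> c1" "c1 < 1" and c2: "1 < c2" and \<epsilon>: "0 \<le> \<epsilon>"
    and \<delta>: "0 \<le> \<delta>" "\<delta> \<le> (c2 - c1 * exp \<epsilon>) * (1 - c1) / (c2 - c1)"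
begin

definition lam :: real where
  "lam = (exp \<epsilon> + (c2 - c1) / (1 - c1) * \<delta> - 1) / ((1 - c1) * exp \<epsilon> + c2 - 1)"

definition r1 :: real where
  "r1 = c1 / (c2 - c1) * (((1 - c1) * exp \<epsilon> + c2 - 1) / (1 - \<delta>))"

definition r2 :: real where
  "r2 = c2 / (c2 - c1) * (((1 - c1) * exp \<epsilon> + c2 - 1) / (exp \<epsilon> + (c2 - 1) / (1 - c1) * \<delta>))"

lemma E_ge_1: "1 \<le> exp \<epsilon>"
  using \<epsilon> by simp

lemma denominators_pos: "0 < c2 - c1" "0 < (1 - c1) * exp \<epsilon> + c2 - 1"
  "0 < exp \<epsilon> + (c2 - 1) / (1 - c1) * \<delta>"
proof -
  have "0 \<le> (c2 - 1) / (1 - c1) * \<delta>" "0 \<le> (1 - c1) * exp \<epsilon>" using c1 c2 \<delta> by simp_all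
  then show "0 < c2 - c1" "0 < (1 - c1) * exp \<epsilon> + c2 - 1" "0 < exp \<epsilon> + (c2 - 1) / (1 - c1) * \<delta>"
    using c1 c2 E_ge_1 by linarith+
qed

lemma lam_times_denominator: "lam * ((1 - c1) * exp \<epsilon> + c2 - 1) = exp \<epsilon> + (c2 - c1) / (1 - c1) * \<delta> - 1"
  unfolding lam_def using denominators_pos by simp

lemma lam_nonneg: "0 \<le> lam"
proof -
  have "0 \<le> (c2 - c1) / (1 - c1) * \<delta>" using c1 c2 \<delta> by simp
  then show ?thesis
    unfolding lam_def using E_ge_1 denominators_pos by (intro divide_nonneg_pos) linarith+
qed

lemma lam_le_1: "lam \<le> 1"
proof -
  have "(c2 - c1) / (1 - c1) * \<delta> \<le> (c2 - c1) / (1 - c1) * ((c2 - c1 * exp \<epsilon>) * (1 - c1) / (c2 - c1))"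
    using \<delta> c1 c2 by (intro mult_left_mono) auto
  also have "\<dots> = c2 - c1 * exp \<epsilon>" using c1 denominators_pos by simp
  finally show ?thesis
    unfolding lam_def using denominators_pos by (simp add: divide_le_eq algebra_simps)
qed

lemma \<delta>_eq: "\<delta> = (1 - c1) / (c2 - c1) * (lam * ((1 - c1) * exp \<epsilon> + c2 - 1) - (exp \<epsilon> - 1))"
  unfolding lam_times_denominator using c1 denominators_pos by simp

lemma mixture_density_max_eq: "lam * c2 + (1 - lam) = (c2 - c1) * (exp \<epsilon> + (c2 - 1) / (1 - c1) * \<delta>) / ((1 - c1) * exp \<epsilon> + c2 - 1)"
proof -
  have "(lam * c2 + (1 - lam)) * ((1 - c1) * exp \<epsilon> + c2 - 1)
      = (1 - c1) * exp \<epsilon> + c2 - 1 + (c2 - 1) * (lam * ((1 - c1) * exp \<epsilon> + c2 - 1))"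
    by (simp add: algebra_simps)
  also have "\<dots> = (c2 - c1) * exp \<epsilon> + (c2 - 1) * ((c2 - c1) / (1 - c1) * \<delta>)"
    unfolding lam_times_denominator by (simp add: algebra_simps)
  also have "\<dots> = (c2 - c1) * (exp \<epsilon> + (c2 - 1) / (1 - c1) * \<delta>)"
    by (simp add: algebra_simps)
  finally show ?thesis using denominators_pos by (simp add: eq_divide_eq)
qed

lemma mixture_density_min_eq: "lam * c1 + (1 - lam) = (c2 - c1) * (1 - \<delta>) / ((1 - c1) * exp \<epsilon> + c2 - 1)"
proof -
  have "(lam * c1 + (1 - lam)) * ((1 - c1) * exp \<epsilon> + c2 - 1)
      = (1 - c1) * exp \<epsilon> + c2 - 1 - (1 - c1) * (lam * ((1 - c1) * exp \<epsilon> + c2 - 1))"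
    by (simp add: algebra_simps)
  also have "\<dots> = (c2 - c1) * (1 - \<delta>)"
  proof -
    have "c1 \<noteq> 1" using c1 by simp
    then show ?thesis unfolding lam_times_denominator by (simp add: field_simps)
  qed
  finally show ?thesis using denominators_pos by (simp add: eq_divide_eq)
qed

text \<open>The mixture has density \<open>lam * g + (1 - lam)\<close> where \<open>g \<in> [c1, c2]\<close> is the density of \<open>P\<close>,
  so \<open>r1\<close> and \<open>r2\<close> are the extreme values of the ratio \<open>g / (lam * g + (1 - lam))\<close>.\<close>

lemma r2_eq: "r2 = c2 / (lam * c2 + (1 - lam))"
  unfolding r2_def mixture_density_max_eq by simp

lemma r1_eq: "r1 = c1 / (lam * c1 + (1 - lam))"
  unfolding r1_def mixture_density_min_eq by simp

lemma mixture_density_max_pos: "0 < lam * c2 + (1 - lam)"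
proof -
  have "0 \<le> lam * (c2 - 1)" using lam_nonneg c2 by simp
  then show ?thesis by (simp add: algebra_simps)
qed

lemma r1_r2_bounds:
  assumes "lam < 1"
  shows "0 \<le> r1" "r1 < 1" "1 < r2"
proof -
  have "0 < (1 - lam) * (1 - c1)" "0 < (1 - lam) * (c2 - 1)"
    using assms c1 c2 by simp_all
  then have "c1 < lam * c1 + (1 - lam)" "lam * c2 + (1 - lam) < c2"
    by (simp_all add: algebra_simps)
  then show "0 \<le> r1" "r1 < 1" "1 < r2"
    unfolding r1_eq r2_eq using c1 mixture_density_max_pos by (auto simp: divide_less_eq)
qed

lemma chord_weight:
  assumes "lam < 1"
  shows "(1 - r1) / (r2 - r1) = (1 - c1) / (c2 - c1) * (lam * c2 + (1 - lam))"
proof -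
  define \<theta> where "\<theta> = (1 - c1) / (c2 - c1) * (lam * c2 + (1 - lam))"
  have "0 \<le> lam * c1" using lam_nonneg c1 by simp
  then have "0 < lam * c1 + (1 - lam)" using assms by linarith
  have "c2 - c1 \<noteq> 0" using denominators_pos by simp
  then have "1 - \<theta> = (c2 - c1 - (1 - c1) * (lam * c2 + (1 - lam))) / (c2 - c1)"
    unfolding \<theta>_def by (simp add: field_simps)
  also have "c2 - c1 - (1 - c1) * (lam * c2 + (1 - lam)) = (c2 - 1) * (lam * c1 + (1 - lam))"
    by (simp add: algebra_simps)
  finally have "1 - \<theta> = (c2 - 1) * (lam * c1 + (1 - lam)) / (c2 - c1)" .
  then have "(1 - \<theta>) * r1 = (c2 - 1) * c1 / (c2 - c1)"
    unfolding r1_eq using \<open>0 < lam * c1 + (1 - lam)\<close> by simp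
  moreover have "\<theta> * r2 = (1 - c1) * c2 / (c2 - c1)"
    unfolding \<theta>_def r2_eq using mixture_density_max_pos by simp
  moreover have "(1 - c1) * c2 + (c2 - 1) * c1 = c2 - c1"
    by (simp add: algebra_simps)
  ultimately have "\<theta> * r2 + (1 - \<theta>) * r1 = 1"
    using denominators_pos by (simp add: add_divide_distrib[symmetric])
  then have "\<theta> * (r2 - r1) = 1 - r1"
    by (simp add: algebra_simps)
  moreover have "r2 - r1 \<noteq> 0" using r1_r2_bounds[OF assms] by simp
  ultimately show ?thesis
    unfolding \<theta>_def[symmetric] by (metis nonzero_mult_div_cancel_right)
qed

lemma chord_weight_eq_count:
  "(1 - c1) / (c2 - c1) * (lam * c2 + (1 - lam))
    = (exp \<epsilon> + ((c2 - c1) / (1 - c1) - 1) * \<delta>) / (exp \<epsilon> + (c2 - c1) / (1 - c1) - 1)"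
proof -
  have "(c2 - c1) / (1 - c1) - 1 = (c2 - 1) / (1 - c1)"
    using c1 by (simp add: field_simps)
  moreover have "exp \<epsilon> + (c2 - c1) / (1 - c1) - 1 = ((1 - c1) * exp \<epsilon> + c2 - 1) / (1 - c1)"
    using c1 by (simp add: field_simps)
  moreover have "c2 - c1 \<noteq> 0" "1 - c1 \<noteq> 0" "(1 - c1) * exp \<epsilon> + c2 - 1 \<noteq> 0"
    using denominators_pos c1 by simp_all
  ultimately show ?thesis
    unfolding mixture_density_max_eq by simp
qed

lemma mixture_in_samplers:
  assumes \<mu>: "prob_space \<mu>"
  shows "(\<lambda>P. mixture lam P \<mu>) \<in> samplers \<mu> (Ptilde c1 c2 \<mu>) \<epsilon> \<delta>"
  unfolding samplers_def
proof (intro CollectI conjI ballI)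
  interpret \<mu>: prob_space \<mu> by fact
  fix P assume P: "P \<in> Ptilde c1 c2 \<mu>"
  show "prob_space (mixture lam P \<mu>)" "sets (mixture lam P \<mu>) = sets \<mu>"
    using prob_space_mixture[OF Ptilde_prob_space[OF P] \<mu> sets_Ptilde[OF P] lam_nonneg lam_le_1]
      sets_mixture[OF Ptilde_prob_space[OF P] \<mu> sets_Ptilde[OF P] lam_nonneg lam_le_1] by auto
  fix P' A assume P': "P' \<in> Ptilde c1 c2 \<mu>" and A: "A \<in> sets \<mu>"
  have c12: "c1 \<le> c2" using c1 c2 by simp
  note bounds = Ptilde_measure_bounds[OF \<mu> _ c1(1) c12]
  have "c1 * measure \<mu> (space \<mu> - A) \<le> measure P (space \<mu> - A)"
    using A P by (intro bounds) auto
  then have "measure P A \<le> 1 - c1 * (1 - measure \<mu> A)"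
    using A prob_space.prob_compl[OF Ptilde_prob_space[OF P], of A] \<mu>.prob_compl[OF A]
    by (simp add: sets_Ptilde[OF P] sets_eq_imp_space_eq[OF sets_Ptilde[OF P]])
  moreover have "0 \<le> (c2 - c1) / (1 - c1) * \<delta>" using c1 c2 \<delta> by simp
  then have "exp \<epsilon> - 1 \<le> lam * ((1 - c1) * exp \<epsilon> + c2 - 1)"
    unfolding lam_times_denominator by simp
  ultimately have "lam * measure P A + (1 - lam) * measure \<mu> A
      \<le> exp \<epsilon> * (lam * measure P' A + (1 - lam) * measure \<mu> A) + \<delta>"
    using mixture_ldp_inequality[OF c1 c2 E_ge_1 lam_nonneg lam_le_1 bounds(2)[OF P A] _ bounds(1)[OF P' A]]
    by (subst (2) \<delta>_eq) simp
  then show "measure (mixture lam P \<mu>) A \<le> exp \<epsilon> * measure (mixture lam P' \<mu>) A + \<delta>"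
    using measure_mixture_Ptilde[OF \<mu> _ lam_nonneg lam_le_1 A] P P' by simp
qed

lemma mixture_ratio_bounds:
  assumes \<mu>: "prob_space \<mu>" and P: "P \<in> Ptilde c1 c2 \<mu>" and A: "A \<in> sets \<mu>"
  shows "r1 * measure (mixture lam P \<mu>) A \<le> measure P A"
    and "measure P A \<le> r2 * measure (mixture lam P \<mu>) A"
proof -
  have c12: "c1 \<le> c2" using c1 c2 by simp
  note mix = measure_mixture_Ptilde[OF \<mu> P lam_nonneg lam_le_1 A]
  have "(1 - lam) * (c1 * measure \<mu> A) \<le> (1 - lam) * measure P A"
    using Ptilde_measure_bounds(1)[OF \<mu> P c1(1) c12 A] lam_le_1 by (intro mult_left_mono) auto
  then have "c1 * measure (mixture lam P \<mu>) A \<le> (lam * c1 + (1 - lam)) * measure P A"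
    unfolding mix by (simp add: algebra_simps)
  then show "r1 * measure (mixture lam P \<mu>) A \<le> measure P A"
    unfolding r1_eq using c1 lam_nonneg lam_le_1
    by (cases "lam * c1 + (1 - lam) = 0") (auto simp: mult.commute divide_le_eq less_le)
  have "(1 - lam) * measure P A \<le> (1 - lam) * (c2 * measure \<mu> A)"
    using Ptilde_measure_bounds(2)[OF \<mu> P c1(1) c12 A] lam_le_1 by (intro mult_left_mono) auto
  then have "(lam * c2 + (1 - lam)) * measure P A \<le> c2 * measure (mixture lam P \<mu>) A"
    unfolding mix by (simp add: algebra_simps)
  then show "measure P A \<le> r2 * measure (mixture lam P \<mu>) A"
    unfolding r2_eq using mixture_density_max_pos by (simp add: le_divide_eq mult.commute)
qed

lemma fdiv_mixture_le:
  assumes \<mu>: "prob_space \<mu>" and f: "convex_on {0<..} f" "f 1 = 0" and P: "P \<in> Ptilde c1 c2 \<mu>"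
  shows "fdiv f P (mixture lam P \<mu>) \<le> chord_value f r1 r2"
proof -
  interpret two_prob_spaces P "mixture lam P \<mu>"
    using Ptilde_prob_space[OF P] prob_space_mixture[OF Ptilde_prob_space[OF P] \<mu> sets_Ptilde[OF P] lam_nonneg lam_le_1]
      sets_mixture[OF Ptilde_prob_space[OF P] \<mu> sets_Ptilde[OF P] lam_nonneg lam_le_1] sets_Ptilde[OF P]
    by (intro two_prob_spacesI) simp_all
  show ?thesis
  proof (cases "lam < 1")
    case True
    then show ?thesis
      using fdiv_le_chord_value[OF f(1) r1_r2_bounds[OF True]] mixture_ratio_bounds[OF \<mu> P]
      by (simp add: sets_Ptilde[OF P])
  next
    case False
    then have "lam = 1" using lam_le_1 by simp
    have "fdiv f P (mixture lam P \<mu>) \<le> ereal (0 + 0)"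
      using measure_mixture_Ptilde[OF \<mu> P lam_nonneg lam_le_1] \<open>lam = 1\<close> f(2) sets_Ptilde[OF P]
      by (intro fdiv_le_line[of 1 1 f 0 0]) auto
    moreover have "r2 = 1" unfolding r2_eq \<open>lam = 1\<close> using c2 by simp
    ultimately show ?thesis using chord_value_at_1[of f, OF f(2)] by (simp add: zero_ereal_def)
  qed
qed

lemma exists_fdiv_ge_chord_value:
  assumes \<mu>: "prob_space \<mu>" and f: "convex_on {0<..} f" "f 1 = 0"
    and k: "real k = (c2 - c1) / (1 - c1)" and dec: "decomposable \<mu> ((1 - c1) / (c2 - c1)) k 1"
    and Q: "Q \<in> samplers \<mu> (Ptilde c1 c2 \<mu>) \<epsilon> \<delta>"
  shows "\<exists>P\<in>Ptilde c1 c2 \<mu>. chord_value f r1 r2 \<le> fdiv f P (Q P)"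
proof -
  obtain A P where A: "\<And>i. i \<in> {1..k} \<Longrightarrow> A i \<in> sets \<mu>" "disjoint_family_on A {1..k}"
    and P: "\<And>i. i \<in> {1..k} \<Longrightarrow> P i \<in> Ptilde c1 c2 \<mu>"
      "\<And>i. i \<in> {1..k} \<Longrightarrow> measure (P i) (A i) = c2 * ((1 - c1) / (c2 - c1))"
    using Ptilde_family_from_decomposition[OF \<mu> c1(1) _ dec] c1 c2 by auto
  have Q_prob: "prob_space (Q P')" "sets (Q P') = sets \<mu>" if "P' \<in> Ptilde c1 c2 \<mu>" for P'
    using Q that unfolding samplers_def by auto
  have "1 < real k" unfolding k using c1 c2 by (simp add: less_divide_eq)
  then obtain i where i: "i \<in> {1..k}"
    and QA: "measure (Q (P i)) (A i) \<le> (exp \<epsilon> + (real k - 1) * \<delta>) / (exp \<epsilon> + real k - 1)"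
    using ldp_pigeonhole[of "{1..k}" "exp \<epsilon>" "\<lambda>i. Q (P i)" \<mu> A \<delta>] A P(1) Q_prob Q
    unfolding samplers_def by fastforce
  interpret two_prob_spaces "P i" "Q (P i)"
    using P(1)[OF i] Q_prob[OF P(1)[OF i]]
    by (intro two_prob_spacesI) (simp_all add: Ptilde_prob_space sets_Ptilde)
  have "chord_value f r1 r2 \<le> fdiv f (P i) (Q (P i))"
  proof (cases "lam < 1")
    case True
    have \<theta>: "(1 - r1) / (r2 - r1) = (1 - c1) / (c2 - c1) * (lam * c2 + (1 - lam))"
      by (rule chord_weight[OF True])
    have "lam * c2 + (1 - lam) \<noteq> 0" using mixture_density_max_pos by simp
    then have "measure (P i) (A i) = (1 - r1) / (r2 - r1) * r2"
      by (simp only: P(2)[OF i] \<theta>) (simp add: r2_eq)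
    moreover have "measure (Q (P i)) (A i) \<le> (1 - r1) / (r2 - r1)"
      using QA unfolding \<theta> chord_weight_eq_count k .
    ultimately show ?thesis
      using fdiv_ge_chord_value[OF f(1) r1_r2_bounds[OF True]] A(1)[OF i]
      by (simp add: sets_Ptilde[OF P(1)[OF i]])
  next
    case False
    then have "r2 = 1" using lam_le_1 c2 by (simp add: r2_eq)
    then show ?thesis using fdiv_nonneg[OF f] chord_value_at_1[of f, OF f(2)] by simp
  qed
  then show ?thesis using P(1)[OF i] by blast
qed

end

theorem proposition4:
  fixes \<mu> :: "'a measure" and c1 c2 \<epsilon> \<delta> :: real and k :: nat and f :: "real \<Rightarrow> real"
  assumes "prob_space \<mu>"
    and "0 \<le> c1" "c1 < 1" "1 < c2"
    and "real k = (c2 - c1) / (1 - c1)"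
    and "0 \<le> \<epsilon>" "0 \<le> \<delta>" "\<delta> \<le> 1"
    and "\<delta> \<le> (c2 - c1 * exp \<epsilon>) * (1 - c1) / (c2 - c1)"
    and "decomposable \<mu> ((1 - c1) / (c2 - c1)) k 1"
    and "convex_on {0<..} f" "f 1 = 0"
  shows "let PP = Ptilde c1 c2 \<mu>;
             r1 = c1 / (c2 - c1) * (((1 - c1) * exp \<epsilon> + c2 - 1) / (1 - \<delta>));
             r2 = c2 / (c2 - c1) * (((1 - c1) * exp \<epsilon> + c2 - 1)
                    / (exp \<epsilon> + (c2 - 1) / (1 - c1) * \<delta>));
             lam = (exp \<epsilon> + (c2 - c1) / (1 - c1) * \<delta> - 1) / ((1 - c1) * exp \<epsilon> + c2 - 1);
             Qstar = (\<lambda>P. mixture lam P \<mu>)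
         in minimax_risk \<mu> PP \<epsilon> \<delta> f
              = ereal ((1 - r1) / (r2 - r1)) * f_ext f r2 + ereal ((r2 - 1) / (r2 - r1)) * f_ext f r1
            \<and> Qstar \<in> samplers \<mu> PP \<epsilon> \<delta>
            \<and> (SUP P\<in>PP. fdiv f P (Qstar P)) = minimax_risk \<mu> PP \<epsilon> \<delta> f"
proof -
  interpret ldp_params c1 c2 \<epsilon> \<delta>
    using assms by unfold_locales auto
  define Qstar where "Qstar = (\<lambda>P. mixture lam P \<mu>)"
  have Qstar: "Qstar \<in> samplers \<mu> (Ptilde c1 c2 \<mu>) \<epsilon> \<delta>"
    unfolding Qstar_def using mixture_in_samplers[OF assms(1)] .
  have upper: "(SUP P\<in>Ptilde c1 c2 \<mu>. fdiv f P (Qstar P)) \<le> chord_value f r1 r2"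
    unfolding Qstar_def using fdiv_mixture_le[OF assms(1,11,12)] by (rule SUP_least)
  have lower: "chord_value f r1 r2 \<le> (SUP P\<in>Ptilde c1 c2 \<mu>. fdiv f P (Q P))"
    if "Q \<in> samplers \<mu> (Ptilde c1 c2 \<mu>) \<epsilon> \<delta>" for Q
    using exists_fdiv_ge_chord_value[OF assms(1,11,12,5,10) that] by (auto intro: SUP_upper2)
  have "minimax_risk \<mu> (Ptilde c1 c2 \<mu>) \<epsilon> \<delta> f \<le> chord_value f r1 r2"
    unfolding minimax_risk_def by (rule INF_lower2[OF Qstar]) (rule upper)
  moreover have "chord_value f r1 r2 \<le> minimax_risk \<mu> (Ptilde c1 c2 \<mu>) \<epsilon> \<delta> f"
    unfolding minimax_risk_def by (rule INF_greatest) (rule lower)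
  ultimately have "minimax_risk \<mu> (Ptilde c1 c2 \<mu>) \<epsilon> \<delta> f = chord_value f r1 r2"
    by (rule antisym)
  moreover have "(SUP P\<in>Ptilde c1 c2 \<mu>. fdiv f P (Qstar P)) = chord_value f r1 r2"
    using upper lower[OF Qstar] by (rule antisym)
  ultimately show ?thesis
    using Qstar unfolding Let_def Qstar_def lam_def r1_def r2_def chord_value_def by simp
qed

end
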